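(* Let $H$ be a matroid that is vertically connected but not vertically $3$-connected, and let $z$ be an element of $H$ such that $H/z$ is vertically $3$-connected. If $A$ is a minimal (under inclusion) vertical $2$-separating set of $H$ containing $z$, then $A$ is a cocircuit of $H$ of rank $2$.
   Context: For $A\subseteq E(H)$, $\lambda_H(A)=r_H(A)+r_H(E(H)-A)-r(H)$. A partition $\{A,B\}$ of $E(H)$ is a vertical $k$-separation if $\lambda_H(A)\le k-1$ and $r_H(A),r_H(B)\ge k$; a vertical $2$-separating set is a set $A$ such that $\{A,E(H)-A\}$ is a vertical $2$-separation. $H$ is vertically connected if it has no vertical $1$-separation, and vertically $3$-connected if it has no vertical $1$- or $2$-separation. *)

theory Defs
  imports Main
begin

definition matroid :: "'a set \<Rightarrow> ('a set \<Rightarrow> bool) \<Rightarrow> bool" where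
  "matroid E indep \<longleftrightarrow>
     finite E \<and> indep {} \<and>
     (\<forall>I. indep I \<longrightarrow> I \<subseteq> E) \<and>
     (\<forall>I J. indep I \<and> J \<subseteq> I \<longrightarrow> indep J) \<and>
     (\<forall>I J. indep I \<and> indep J \<and> card I < card J \<longrightarrow>
        (\<exists>x \<in> J - I. indep (insert x I)))"

definition rk :: "('a set \<Rightarrow> bool) \<Rightarrow> 'a set \<Rightarrow> nat" where
  "rk indep X = Max {card I | I. I \<subseteq> X \<and> indep I}"

definition contract_indep :: "'a set \<Rightarrow> ('a set \<Rightarrow> bool) \<Rightarrow> 'a \<Rightarrow> 'a set \<Rightarrow> bool" where
  "contract_indep E indep z I \<longleftrightarrow>
     I \<subseteq> E - {z} \<and> rk indep (insert z I) = card I + rk indep {z}"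

definition conn :: "'a set \<Rightarrow> ('a set \<Rightarrow> bool) \<Rightarrow> 'a set \<Rightarrow> int" where
  "conn E indep A = int (rk indep A) + int (rk indep (E - A)) - int (rk indep E)"

definition vert_sep :: "'a set \<Rightarrow> ('a set \<Rightarrow> bool) \<Rightarrow> nat \<Rightarrow> 'a set \<Rightarrow> 'a set \<Rightarrow> bool" where
  "vert_sep E indep k A B \<longleftrightarrow>
     A \<union> B = E \<and> A \<inter> B = {} \<and>
     conn E indep A \<le> int k - 1 \<and> rk indep A \<ge> k \<and> rk indep B \<ge> k"

definition vert_2_separating :: "'a set \<Rightarrow> ('a set \<Rightarrow> bool) \<Rightarrow> 'a set \<Rightarrow> bool" where
  "vert_2_separating E indep A \<longleftrightarrow> A \<subseteq> E \<and> vert_sep E indep 2 A (E - A)"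

definition vert_connected :: "'a set \<Rightarrow> ('a set \<Rightarrow> bool) \<Rightarrow> bool" where
  "vert_connected E indep \<longleftrightarrow> \<not> (\<exists>A B. vert_sep E indep 1 A B)"

definition vert_3_connected :: "'a set \<Rightarrow> ('a set \<Rightarrow> bool) \<Rightarrow> bool" where
  "vert_3_connected E indep \<longleftrightarrow>
     \<not> (\<exists>A B. vert_sep E indep 1 A B) \<and> \<not> (\<exists>A B. vert_sep E indep 2 A B)"

definition basis :: "'a set \<Rightarrow> ('a set \<Rightarrow> bool) \<Rightarrow> 'a set \<Rightarrow> bool" where
  "basis E indep B \<longleftrightarrow> indep B \<and> (\<forall>I. indep I \<and> B \<subseteq> I \<longrightarrow> I = B)"

definition dual_indep :: "'a set \<Rightarrow> ('a set \<Rightarrow> bool) \<Rightarrow> 'a set \<Rightarrow> bool" where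
  "dual_indep E indep I \<longleftrightarrow> I \<subseteq> E \<and> (\<exists>B. basis E indep B \<and> I \<subseteq> E - B)"

definition circuit :: "'a set \<Rightarrow> ('a set \<Rightarrow> bool) \<Rightarrow> 'a set \<Rightarrow> bool" where
  "circuit E indep C \<longleftrightarrow> C \<subseteq> E \<and> \<not> indep C \<and> (\<forall>D. D \<subset> C \<longrightarrow> indep D)"

definition cocircuit :: "'a set \<Rightarrow> ('a set \<Rightarrow> bool) \<Rightarrow> 'a set \<Rightarrow> bool" where
  "cocircuit E indep C \<longleftrightarrow> circuit E (dual_indep E indep) C"

end

theory Submission
  imports Defs
begin

text \<open>
  Let \<open>B = E - A\<close>. Vertical connectivity forces \<open>\<lambda>(A) = 1\<close>, i.e. \<open>r(A) + r(B) = r(E) + 1\<close>.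
  Contracting \<open>z\<close> changes the connectivity of \<open>A - {z}\<close> to
  \<open>1 + r(B \<union> {z}) - r(B) - r({z})\<close>, so vertical 3-connectivity of \<open>H/z\<close> rules out
  \<open>z \<in> cl(B)\<close> and \<open>r(A) \<ge> 3\<close>; hence \<open>r(A) = 2\<close> and \<open>B\<close> is a hyperplane.
  If some \<open>x \<in> A - {z}\<close> lay in \<open>cl(B)\<close>, then \<open>A - {x}\<close>, which still has rank 2 since it
  contains the non-loop \<open>z\<close>, would be a smaller vertical 2-separating set containing \<open>z\<close>.
  So every element of \<open>A\<close> spans \<open>H\<close> together with the hyperplane \<open>B\<close>, which makes \<open>A\<close>
  a cocircuit.
\<close>

lemma rk_eqI:
  assumes "\<And>I. I \<subseteq> X \<Longrightarrow> P I \<Longrightarrow> card I \<le> m"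
    and "J \<subseteq> X" "P J" "card J = m"
  shows "rk P X = m"
proof -
  have "finite {card I | I. I \<subseteq> X \<and> P I}"
    by (rule finite_subset[of _ "{..m}"]) (auto dest: assms(1))
  then show ?thesis
    unfolding rk_def by (rule Max_eqI) (use assms in auto)
qed

locale matroid_set =
  fixes E :: "'a set" and indep :: "'a set \<Rightarrow> bool"
  assumes matroid: "matroid E indep"
begin

lemma indep_subset_ground: "indep I \<Longrightarrow> I \<subseteq> E"
  using matroid unfolding matroid_def by blast

lemma finite_ground: "finite E"
  using matroid unfolding matroid_def by blast

lemma indep_finite: "indep I \<Longrightarrow> finite I"
  using indep_subset_ground finite_ground finite_subset by blast

lemma indep_empty: "indep {}"
  using matroid unfolding matroid_def by blast

lemma indep_subset: "indep I \<Longrightarrow> J \<subseteq> I \<Longrightarrow> indep J"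
  using matroid unfolding matroid_def by blast

lemma indep_augment:
  "indep I \<Longrightarrow> indep J \<Longrightarrow> card I < card J \<Longrightarrow> \<exists>x \<in> J - I. indep (insert x I)"
  using matroid unfolding matroid_def by blast

lemma finite_rk_candidates: "finite {card I | I. I \<subseteq> X \<and> indep I}"
  by (rule finite_subset[of _ "{..card E}"])
    (auto intro: card_mono finite_ground dest: indep_subset_ground)

lemma card_le_rk: "indep I \<Longrightarrow> I \<subseteq> X \<Longrightarrow> card I \<le> rk indep X"
  unfolding rk_def by (rule Max_ge[OF finite_rk_candidates]) auto

lemma rk_witness: obtains I where "I \<subseteq> X" "indep I" "card I = rk indep X"
proof -
  have "rk indep X \<in> {card I | I. I \<subseteq> X \<and> indep I}"
    unfolding rk_def by (rule Max_in[OF finite_rk_candidates]) (use indep_empty in auto)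
  then obtain I where "I \<subseteq> X" "indep I" "card I = rk indep X"
    by auto
  then show ?thesis by (rule that)
qed

lemma indep_extend_to_rk:
  assumes "indep I" "I \<subseteq> X"
  obtains J where "I \<subseteq> J" "J \<subseteq> X" "indep J" "card J = rk indep X"
proof -
  have "\<exists>J. I \<subseteq> J \<and> J \<subseteq> X \<and> indep J \<and> card J = rk indep X"
    using assms
  proof (induction "rk indep X - card I" arbitrary: I rule: less_induct)
    case less
    show ?case
    proof (cases "card I < rk indep X")
      case False
      then show ?thesis
        using card_le_rk[OF less.prems] less.prems by (intro exI[of _ I]) simp
    next
      case True
      obtain K where K: "K \<subseteq> X" "indep K" "card K = rk indep X"
        using rk_witness .
      then obtain x where x: "x \<in> K - I" "indep (insert x I)"
        using indep_augment[OF less.prems(1) K(2)] True by auto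
      have "card (insert x I) = Suc (card I)"
        using x indep_finite[OF less.prems(1)] by simp
      then have smaller: "rk indep X - card (insert x I) < rk indep X - card I"
        using True by linarith
      have "insert x I \<subseteq> X"
        using x K(1) less.prems(2) by blast
      with less.hyps[OF smaller x(2)] obtain J
        where "insert x I \<subseteq> J" "J \<subseteq> X" "indep J" "card J = rk indep X"
        by blast
      then show ?thesis by blast
    qed
  qed
  with that show ?thesis by metis
qed

lemma rk_mono: "X \<subseteq> Y \<Longrightarrow> rk indep X \<le> rk indep Y"
  by (metis card_le_rk order_trans rk_witness)

lemma rk_le_card: "finite X \<Longrightarrow> rk indep X \<le> card X"
  by (metis card_mono rk_witness)

lemma rk_singleton_le_1: "rk indep {x} \<le> 1"
  using rk_le_card[of "{x}"] by simp

lemma rk_insert_le: "rk indep (insert x X) \<le> rk indep X + rk indep {x}"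
proof -
  obtain I where I: "I \<subseteq> insert x X" "indep I" "card I = rk indep (insert x X)"
    using rk_witness .
  have "card I \<le> card (I - {x}) + card (I \<inter> {x})"
    using card_Un_le[of "I - {x}" "I \<inter> {x}"] by (simp add: Un_Diff_Int)
  also have "card (I - {x}) \<le> rk indep X"
    using I by (intro card_le_rk) (auto intro: indep_subset)
  also have "card (I \<inter> {x}) \<le> rk indep {x}"
    using I by (intro card_le_rk) (auto intro: indep_subset)
  finally show ?thesis using I(3) by simp
qed

lemma rk_contract:
  assumes "X \<subseteq> E - {z}"
  shows "rk (contract_indep E indep z) X + rk indep {z} = rk indep (insert z X)"
proof -
  obtain I0 where I0: "I0 \<subseteq> {z}" "indep I0" "card I0 = rk indep {z}"
    using rk_witness .
  moreover have "I0 \<subseteq> insert z X"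
    using I0(1) by blast
  ultimately obtain J where J: "I0 \<subseteq> J" "J \<subseteq> insert z X" "indep J" "card J = rk indep (insert z X)"
    by (metis indep_extend_to_rk)
  define I where "I = J - {z}"
  have "indep (J \<inter> {z})"
    using J(3) by (rule indep_subset) blast
  then have "card (J \<inter> {z}) \<le> rk indep {z}"
    using card_le_rk by blast
  moreover have "card I0 \<le> card (J \<inter> {z})"
    using I0(1) J(1) by (intro card_mono) auto
  moreover have "card J = card I + card (J \<inter> {z})"
    unfolding I_def using indep_finite[OF J(3)]
    by (subst card_Un_disjoint[symmetric]) (auto simp: Un_Diff_Int)
  ultimately have card_J: "card J = card I + rk indep {z}"
    using I0(3) by linarith
  have "card J \<le> rk indep (insert z I)"
    by (rule card_le_rk[OF J(3)]) (auto simp: I_def)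
  moreover have "rk indep (insert z I) \<le> rk indep (insert z X)"
    using J(2) unfolding I_def by (intro rk_mono) blast
  ultimately have "rk indep (insert z I) = card J"
    using J(4) by linarith
  moreover have "I \<subseteq> E - {z}"
    using indep_subset_ground[OF J(3)] unfolding I_def by blast
  ultimately have I_indep: "contract_indep E indep z I"
    unfolding contract_indep_def using card_J by simp
  have "card I' \<le> rk indep (insert z X) - rk indep {z}"
    if "I' \<subseteq> X" "contract_indep E indep z I'" for I'
  proof -
    have "rk indep (insert z I') \<le> rk indep (insert z X)"
      using that(1) by (intro rk_mono) blast
    with that(2) show ?thesis
      unfolding contract_indep_def by linarith
  qed
  moreover have "I \<subseteq> X"
    using J(2) unfolding I_def by blast
  ultimately have "rk (contract_indep E indep z) X = rk indep (insert z X) - rk indep {z}"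
    using I_indep J(4) card_J by (intro rk_eqI[where J=I]) auto
  then show ?thesis
    using J(4) card_J by linarith
qed

lemma basis_card_ge_rk:
  assumes B: "basis E indep B"
  shows "rk indep E \<le> card B"
proof (rule ccontr)
  assume small: "\<not> rk indep E \<le> card B"
  obtain K where K: "K \<subseteq> E" "indep K" "card K = rk indep E"
    using rk_witness .
  have "indep B"
    using B unfolding basis_def by blast
  with K small obtain x where x: "x \<in> K - B" "indep (insert x B)"
    using indep_augment[of B K] by auto
  then have "insert x B = B"
    using B unfolding basis_def by blast
  with x show False by blast
qed

lemma basisI_card_rk:
  assumes "indep B" "card B = rk indep E"
  shows "basis E indep B"
  unfolding basis_def
proof (intro conjI allI impI)
  fix I assume I: "indep I \<and> B \<subseteq> I"
  then have "card I \<le> card B"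
    using card_le_rk[of I E] indep_subset_ground assms(2) by simp
  then show "I = B"
    using I indep_finite card_seteq by blast
qed (rule assms(1))

lemma dual_indep_iff_rk:
  "dual_indep E indep D \<longleftrightarrow> D \<subseteq> E \<and> rk indep (E - D) = rk indep E"
proof
  assume "dual_indep E indep D"
  then obtain B where D: "D \<subseteq> E" and B: "basis E indep B" "D \<subseteq> E - B"
    unfolding dual_indep_def by blast
  have "indep B"
    using B(1) unfolding basis_def by blast
  moreover have "B \<subseteq> E - D"
    using B(2) indep_subset_ground[OF \<open>indep B\<close>] by blast
  ultimately have "card B \<le> rk indep (E - D)"
    by (rule card_le_rk)
  with basis_card_ge_rk[OF B(1)] have "rk indep E \<le> rk indep (E - D)"
    by linarith
  with D show "D \<subseteq> E \<and> rk indep (E - D) = rk indep E"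
    using rk_mono[of "E - D" E] by auto
next
  assume D: "D \<subseteq> E \<and> rk indep (E - D) = rk indep E"
  obtain B where B: "B \<subseteq> E - D" "indep B" "card B = rk indep (E - D)"
    using rk_witness .
  with D have "basis E indep B"
    using basisI_card_rk by simp
  with B(1) D show "dual_indep E indep D"
    unfolding dual_indep_def by blast
qed

lemma cocircuitI_hyperplane_complement:
  assumes "A \<subseteq> E" "rk indep (E - A) < rk indep E"
    and "\<And>x. x \<in> A \<Longrightarrow> rk indep (insert x (E - A)) = rk indep E"
  shows "cocircuit E indep A"
  unfolding cocircuit_def circuit_def
proof (intro conjI allI impI)
  show "\<not> dual_indep E indep A"
    using assms(2) by (simp add: dual_indep_iff_rk)
next
  fix D assume "D \<subset> A"
  then obtain x where x: "x \<in> A" "insert x (E - A) \<subseteq> E - D"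
    using assms(1) by blast
  then have "rk indep E \<le> rk indep (E - D)"
    using assms(3) rk_mono by metis
  then show "dual_indep E indep D"
    using \<open>D \<subset> A\<close> assms(1) rk_mono[of "E - D" E] by (auto simp: dual_indep_iff_rk)
qed (use assms(1) in simp)

lemma vert_2_separating_conn_eq_1:
  assumes "vert_connected E indep" "vert_2_separating E indep A"
  shows "conn E indep A = 1"
proof -
  have sep: "A \<union> (E - A) = E" "A \<inter> (E - A) = {}" "conn E indep A \<le> 1"
    "2 \<le> rk indep A" "2 \<le> rk indep (E - A)"
    using assms(2) unfolding vert_2_separating_def vert_sep_def by auto
  have "\<not> vert_sep E indep 1 A (E - A)"
    using assms(1) unfolding vert_connected_def by blast
  with sep have "\<not> conn E indep A \<le> 0"
    unfolding vert_sep_def by auto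
  with sep(3) show ?thesis by linarith
qed

lemma vert_sep_contract_iff:
  assumes "z \<in> A" "A \<subseteq> E"
  shows "vert_sep (E - {z}) (contract_indep E indep z) k (A - {z}) (E - A) \<longleftrightarrow>
    conn E indep A + int (rk indep (insert z (E - A))) \<le>
      int k - 1 + int (rk indep (E - A)) + int (rk indep {z}) \<and>
    k + rk indep {z} \<le> rk indep A \<and> k + rk indep {z} \<le> rk indep (insert z (E - A))"
proof -
  let ?C = "contract_indep E indep z"
  have "rk ?C (A - {z}) + rk indep {z} = rk indep A"
    using rk_contract[of "A - {z}" z] assms by (auto simp: insert_absorb)
  moreover have "rk ?C (E - A) + rk indep {z} = rk indep (insert z (E - A))"
    using rk_contract[of "E - A" z] assms by auto
  moreover have "rk ?C (E - {z}) + rk indep {z} = rk indep E"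
    using rk_contract[of "E - {z}" z] assms by (auto simp: insert_absorb)
  moreover have "E - {z} - (A - {z}) = E - A" "(A - {z}) \<union> (E - A) = E - {z}"
    "(A - {z}) \<inter> (E - A) = {}"
    using assms by auto
  ultimately show ?thesis
    unfolding vert_sep_def conn_def by (simp only: simp_thms) linarith
qed

lemma contract_vert_3_connected_consequences:
  assumes "vert_connected E indep" "vert_2_separating E indep A" "z \<in> A"
    and "vert_3_connected (E - {z}) (contract_indep E indep z)"
  shows "rk indep (insert z (E - A)) = Suc (rk indep (E - A))" "rk indep A = 2"
proof -
  let ?B = "E - A"
  have AE: "A \<subseteq> E" and ranks: "2 \<le> rk indep A" "2 \<le> rk indep ?B"
    using assms(2) unfolding vert_2_separating_def vert_sep_def by auto
  have contract_sep_iff: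
    "vert_sep (E - {z}) (contract_indep E indep z) k (A - {z}) ?B \<longleftrightarrow>
      rk indep (insert z ?B) + 2 \<le> k + rk indep ?B + rk indep {z} \<and>
      k + rk indep {z} \<le> rk indep A \<and> k + rk indep {z} \<le> rk indep (insert z ?B)" for k
    using vert_sep_contract_iff[OF assms(3) AE] vert_2_separating_conn_eq_1[OF assms(1,2)]
    by simp arith
  have no_sep: "\<not> vert_sep (E - {z}) (contract_indep E indep z) k (A - {z}) ?B"
    if "k = 1 \<or> k = 2" for k
    using assms(4) that unfolding vert_3_connected_def by blast
  have z_bounds: "rk indep ?B \<le> rk indep (insert z ?B)"
    "rk indep (insert z ?B) \<le> rk indep ?B + rk indep {z}" "rk indep {z} \<le> 1"
    using rk_singleton_le_1[of z] by (auto intro: rk_mono rk_insert_le)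
  have "rk indep (insert z ?B) \<noteq> rk indep ?B"
  proof
    assume "rk indep (insert z ?B) = rk indep ?B"
    with no_sep[of 1] no_sep[of 2] show False
      unfolding contract_sep_iff using ranks z_bounds(3) by (cases "rk indep {z}") auto
  qed
  with z_bounds show z_not_spanned: "rk indep (insert z ?B) = Suc (rk indep ?B)"
    by linarith
  with z_bounds have "rk indep {z} = 1"
    by linarith
  with no_sep[of 2] ranks z_not_spanned show "rk indep A = 2"
    unfolding contract_sep_iff by auto
qed

lemma vert_2_separating_remove_spanned:
  assumes "vert_2_separating E indep A" "x \<in> A"
    and "rk indep (insert x (E - A)) = rk indep (E - A)" "2 \<le> rk indep (A - {x})"
  shows "vert_2_separating E indep (A - {x})"
proof -
  have "E - (A - {x}) = insert x (E - A)"
    using assms(1,2) unfolding vert_2_separating_def by auto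
  moreover have "rk indep (A - {x}) \<le> rk indep A"
    by (rule rk_mono) auto
  ultimately show ?thesis
    using assms unfolding vert_2_separating_def vert_sep_def conn_def by auto
qed

lemma minimal_vert_2_separating_elem_not_spanned:
  assumes "vert_connected E indep" "vert_2_separating E indep A" "rk indep A = 2"
    and "z \<in> A" "rk indep {z} = 1" "x \<in> A" "x \<noteq> z"
    and "\<forall>A'. A' \<subset> A \<and> z \<in> A' \<longrightarrow> \<not> vert_2_separating E indep A'"
  shows "rk indep (insert x (E - A)) = Suc (rk indep (E - A))"
proof (rule ccontr)
  let ?B = "E - A"
  assume "rk indep (insert x ?B) \<noteq> Suc (rk indep ?B)"
  then have spanned: "rk indep (insert x ?B) = rk indep ?B"
    using rk_mono[OF subset_insertI, of ?B x] rk_insert_le[of x ?B] rk_singleton_le_1[of x]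
    by linarith
  have "rk indep (A - {x}) \<le> 2" "1 \<le> rk indep (A - {x})"
    using assms(3,4,5,7) rk_mono[of "A - {x}" A] rk_mono[of "{z}" "A - {x}"] by auto
  moreover have "rk indep (A - {x}) \<noteq> 1"
  proof
    assume rk1: "rk indep (A - {x}) = 1"
    have "E - (A - {x}) = insert x ?B" "(A - {x}) \<union> insert x ?B = E"
      using assms(2,6) unfolding vert_2_separating_def by auto
    then have "vert_sep E indep 1 (A - {x}) (insert x ?B)"
      using vert_2_separating_conn_eq_1[OF assms(1,2)] assms(2,3) rk1 spanned
      unfolding vert_sep_def conn_def vert_2_separating_def by auto
    then show False
      using assms(1) unfolding vert_connected_def by blast
  qed
  ultimately have "vert_2_separating E indep (A - {x})"
    using vert_2_separating_remove_spanned[OF assms(2,6) spanned] by simp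
  then show False
    using assms(4,6,7,8) by blast
qed

end

theorem lemma3p3:
  fixes E :: "'a set" and indep :: "'a set \<Rightarrow> bool" and z :: 'a and A :: "'a set"
  assumes "matroid E indep"
    and "vert_connected E indep"
    and "\<not> vert_3_connected E indep"
    and "z \<in> E"
    and "vert_3_connected (E - {z}) (contract_indep E indep z)"
    and "vert_2_separating E indep A" and "z \<in> A"
    and "\<forall>A'. A' \<subset> A \<and> z \<in> A' \<longrightarrow> \<not> vert_2_separating E indep A'"
  shows "cocircuit E indep A \<and> rk indep A = 2"
proof -
  interpret matroid_set E indep
    using assms(1) by (rule matroid_set.intro)
  let ?B = "E - A"
  have AE: "A \<subseteq> E"
    using assms(6) unfolding vert_2_separating_def by blast
  have z_not_spanned: "rk indep (insert z ?B) = Suc (rk indep ?B)" and rk_A: "rk indep A = 2"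
    using contract_vert_3_connected_consequences assms(2,5,6,7) by auto
  have z_nonloop: "rk indep {z} = 1"
    using z_not_spanned rk_insert_le[of z ?B] rk_singleton_le_1[of z] by linarith
  have hyperplane: "rk indep E = Suc (rk indep ?B)"
    using vert_2_separating_conn_eq_1[OF assms(2,6)] rk_A unfolding conn_def by linarith
  have "rk indep (insert x ?B) = rk indep E" if "x \<in> A" for x
    using z_not_spanned minimal_vert_2_separating_elem_not_spanned[OF assms(2,6) rk_A assms(7)
        z_nonloop that _ assms(8)] hyperplane
    by (cases "x = z") auto
  then have "cocircuit E indep A"
    using cocircuitI_hyperplane_complement[OF AE] hyperplane by simp
  with rk_A show ?thesis by simp
qed

end
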